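(* Let $\xi>0$, $f\in\mathcal{C}^{\rm Step}(\xi)$, and let $\Gamma$ be the set of points of discontinuity of $f$. Then for every $u\in\mathbb{R}\setminus\Gamma$, \[ \lim_{\delta\searrow0}\mathbb{P}^{\rm BM}_u\bigl(\tau_v\ge f^{+,\delta}(v)-f(u)\ \forall v\in\mathbb{R}\bigr)=\mathbb{P}^{\rm BM}_u\bigl(\tau_v\ge f(v)-f(u)\ \forall v\in\mathbb{R}\bigr). \]
   Context: For $u\in\mathbb{R}$, $\mathbb{P}^{\rm BM}_u$ is the law of one-dimensional Brownian motion $(B_t)$ started at $u$, and $\tau_v:=\inf\{t\ge0:B_t=v\}$. For $\xi>0$, $\mathcal{C}(\xi)$ is the set of functions $f:\mathbb{R}\to[0,\infty)$ that are non-increasing on $(-\infty,0]$, non-decreasing on $[0,\infty)$, with $\lim_{x\to0}f(x)=0$, $\sup_{\mathbb{R}}f\le\xi$ and $\lim_{x\to\infty}f(x)=\xi$; $\mathcal{C}^{\rm Step}(\xi)$ is the set of step functions (piecewise constant with finitely many points of discontinuity) in $\mathcal{C}(\xi)$. For $\delta>0$, $f^{+,\delta}(u):=\sup_{w\in[u-\delta,u+\delta]}f(w)$. *)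

theory Defs
  imports "HOL-Probability.Probability"
begin

definition is_BM :: "'a measure \<Rightarrow> real \<Rightarrow> (real \<Rightarrow> 'a \<Rightarrow> real) \<Rightarrow> bool" where
  "is_BM M u B \<longleftrightarrow>
     prob_space M \<and>
     (\<forall>t. B t \<in> borel_measurable M) \<and>
     (\<forall>\<omega>\<in>space M. B 0 \<omega> = u \<and> continuous_on {0..} (\<lambda>t. B t \<omega>)) \<and>
     (\<forall>s t. 0 \<le> s \<and> s < t \<longrightarrow>
        distributed M lborel (\<lambda>\<omega>. B t \<omega> - B s \<omega>)
          (\<lambda>x. ennreal (normal_density 0 (sqrt (t - s)) x))) \<and>
     (\<forall>ts::real list. sorted_wrt (<) ts \<and> (\<forall>t\<in>set ts. 0 \<le> t) \<longrightarrow>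
        prob_space.indep_vars M (\<lambda>_. borel)
          (\<lambda>i \<omega>. B (ts ! Suc i) \<omega> - B (ts ! i) \<omega>) {..<length ts - 1})"

text \<open>Hitting time tau_v = inf {t \<ge> 0. B_t = v}, with inf of the empty set = \<infinity>.\<close>
definition hitting_time :: "(real \<Rightarrow> 'a \<Rightarrow> real) \<Rightarrow> real \<Rightarrow> 'a \<Rightarrow> ereal" where
  "hitting_time B v \<omega> = (INF t\<in>{t. 0 \<le> t \<and> B t \<omega> = v}. ereal t)"

definition class_C :: "real \<Rightarrow> (real \<Rightarrow> real) \<Rightarrow> bool" where
  "class_C \<xi> f \<longleftrightarrow>
     (\<forall>x. 0 \<le> f x) \<and>
     antimono_on {..0} f \<and> mono_on {0..} f \<and>
     (f \<longlongrightarrow> 0) (at 0) \<and>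
     (\<forall>x. f x \<le> \<xi>) \<and>
     (f \<longlongrightarrow> \<xi>) at_top"

definition step_fun :: "(real \<Rightarrow> real) \<Rightarrow> bool" where
  "step_fun f \<longleftrightarrow> (\<exists>S. finite S \<and>
     (\<forall>x. x \<notin> S \<longrightarrow> (\<exists>e>0. \<forall>y. \<bar>y - x\<bar> < e \<longrightarrow> f y = f x)))"

definition class_C_step :: "real \<Rightarrow> (real \<Rightarrow> real) \<Rightarrow> bool" where
  "class_C_step \<xi> f \<longleftrightarrow> class_C \<xi> f \<and> step_fun f"

definition fplus :: "(real \<Rightarrow> real) \<Rightarrow> real \<Rightarrow> real \<Rightarrow> real" where
  "fplus f \<delta> u = (SUP w\<in>{u - \<delta>..u + \<delta>}. f w)"

end

theory Submission
  imports Defs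
begin

text \<open>
  Write \<open>c = f u\<close>. Unfolding the hitting times, the event for a barrier \<open>g\<close> says that
  \<open>g (B t) \<le> t + c\<close> for all \<open>t \<ge> 0\<close>. As \<open>f\<close> takes finitely many values, this is the
  finite conjunction, over the values \<open>y > c\<close> of the barrier, of the events that \<open>B\<close> stays in
  the interval \<open>{f < y}\<close> during \<open>[0, y - c)\<close>. The events for \<open>fplus f \<delta>\<close> increase as \<open>\<delta>\<close>
  decreases to \<open>0\<close> and lie inside the event for \<open>f\<close>, so by continuity of measure it suffices that
  almost every path of the latter keeps, for every such \<open>y\<close>, a positive distance from the
  complement of \<open>{f < y}\<close> over \<open>[0, y - c]\<close>. By compactness this can only fail if the running
  maximum or minimum of \<open>B\<close> over that interval hits an endpoint of \<open>{f < y}\<close>. Continuity of \<open>f\<close>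
  at \<open>u\<close> puts these endpoints strictly away from \<open>u = B 0\<close>, and the running maximum of Brownian
  motion has no atom above its starting point: over \<open>[r, s]\<close> with \<open>r > 0\<close> its grid
  approximations inherit the Gaussian anticoncentration of the independent increment
  \<open>B r - B 0\<close>, and near time \<open>0\<close> the path stays below the level.
\<close>

section \<open>Running maximum of a continuous path\<close>

definition path_sup :: "(real \<Rightarrow> real) \<Rightarrow> real \<Rightarrow> real \<Rightarrow> real" where
  "path_sup p a b = (SUP t\<in>{a..b}. p t)"

lemma bdd_above_continuous_image_interval:
  fixes p :: "real \<Rightarrow> real"
  assumes "continuous_on {a..b} p"
  shows "bdd_above (p ` {a..b})"
  by (intro bounded_imp_bdd_above compact_imp_bounded compact_continuous_image compact_Icc assms)

lemma path_sup_upper: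
  assumes "continuous_on {a..b} p" "s \<in> {a..b}"
  shows "p s \<le> path_sup p a b"
  unfolding path_sup_def using assms bdd_above_continuous_image_interval by (intro cSUP_upper)

lemma path_sup_attained:
  assumes "a \<le> b" "continuous_on {a..b} p"
  obtains t where "t \<in> {a..b}" "path_sup p a b = p t"
proof -
  obtain t where t: "t \<in> {a..b}" "\<forall>s\<in>{a..b}. p s \<le> p t"
    using continuous_attains_sup[of "{a..b}" p] assms by auto
  have "path_sup p a b = p t"
    unfolding path_sup_def using t by (intro antisym cSUP_least cSUP_upper2) auto
  with t that show ?thesis by blast
qed

lemma path_sup_split:
  assumes "a \<le> b" "b \<le> c" "continuous_on {a..c} p"
  shows "path_sup p a c = max (path_sup p a b) (path_sup p b c)"
proof -
  have "{a..c} = {a..b} \<union> {b..c}" using assms by auto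
  moreover have "continuous_on {a..b} p" "continuous_on {b..c} p"
    using assms by (auto intro: continuous_on_subset)
  ultimately show ?thesis
    unfolding path_sup_def using assms
    by (simp add: cSUP_union bdd_above_continuous_image_interval sup_max)
qed

definition grid :: "real \<Rightarrow> real \<Rightarrow> nat \<Rightarrow> nat \<Rightarrow> real" where
  "grid a b n k = a + (b - a) * real k / real (Suc n)"

definition grid_max :: "(real \<Rightarrow> real) \<Rightarrow> real \<Rightarrow> real \<Rightarrow> nat \<Rightarrow> real" where
  "grid_max p a b n = (MAX k\<in>{..Suc n}. p (grid a b n k))"

lemma grid_in_interval:
  assumes "a \<le> b" "k \<le> Suc n"
  shows "grid a b n k \<in> {a..b}"
proof -
  have "(b - a) * real k / real (Suc n) \<le> (b - a) * 1"
    using assms by (simp add: divide_le_eq mult_left_mono)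
  then show ?thesis using assms unfolding grid_def by auto
qed

lemma strict_mono_grid: "a < b \<Longrightarrow> strict_mono (grid a b n)"
  unfolding grid_def strict_mono_def by (simp add: divide_strict_right_mono)

lemma grid_max_le_path_sup:
  assumes "a \<le> b" "continuous_on {a..b} p"
  shows "grid_max p a b n \<le> path_sup p a b"
  unfolding grid_max_def using assms grid_in_interval path_sup_upper by auto

lemma grid_point_below:
  assumes "t \<in> {a..b}"
  obtains k where "k \<le> Suc n" "t - (b - a) / real (Suc n) \<le> grid a b n k" "grid a b n k \<le> t"
proof -
  define x where "x = (t - a) * real (Suc n) / (b - a)"
  define k where "k = nat \<lfloor>x\<rfloor>"
  have x_bounds: "0 \<le> x" "x \<le> real (Suc n)"
    using assms by (auto simp: x_def divide_le_eq mult_left_mono)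
  have "real k = of_int \<lfloor>x\<rfloor>"
    using x_bounds(1) by (simp add: k_def)
  then have k: "real k \<le> x" "x \<le> real k + 1"
    by (simp_all add: of_int_floor_le real_of_int_floor_add_one_ge)
  have "k \<le> Suc n"
    using x_bounds by (simp add: k_def nat_le_iff floor_le_iff)
  have "t = a + (b - a) * x / real (Suc n)"
    using assms by (cases "a = b") (auto simp: x_def)
  then have "t - grid a b n k = (b - a) * (x - real k) / real (Suc n)"
    by (simp add: grid_def right_diff_distrib diff_divide_distrib)
  moreover have "0 \<le> (b - a) * (x - real k)" "(b - a) * (x - real k) \<le> b - a"
    using assms k mult_left_mono[of "x - real k" 1 "b - a"] by simp_all
  then have "0 \<le> (b - a) * (x - real k) / real (Suc n)"
    "(b - a) * (x - real k) / real (Suc n) \<le> (b - a) / real (Suc n)"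
    by (simp_all add: divide_right_mono)
  ultimately show ?thesis
    using that[OF \<open>k \<le> Suc n\<close>] by linarith
qed

lemma grid_max_tendsto_path_sup:
  assumes "a \<le> b" "continuous_on {a..b} p"
  shows "(\<lambda>n. grid_max p a b n) \<longlonglongrightarrow> path_sup p a b"
proof -
  obtain t where t: "t \<in> {a..b}" "path_sup p a b = p t"
    using path_sup_attained assms by blast
  have "\<forall>n. \<exists>k. k \<le> Suc n \<and> t - (b - a) / real (Suc n) \<le> grid a b n k \<and> grid a b n k \<le> t"
    using grid_point_below[OF t(1)] by metis
  then obtain k where k: "\<And>n. k n \<le> Suc n"
    "\<And>n. t - (b - a) / real (Suc n) \<le> grid a b n (k n)" "\<And>n. grid a b n (k n) \<le> t"
    by metis
  have lower: "(\<lambda>n. t - (b - a) / real (Suc n)) \<longlonglongrightarrow> t"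
    using tendsto_diff[OF tendsto_const LIMSEQ_Suc[OF lim_const_over_n[of "b - a"]], of t] by simp
  have "(\<lambda>n. grid a b n (k n)) \<longlonglongrightarrow> t"
    by (rule real_tendsto_sandwich[OF _ _ lower tendsto_const]) (use k in auto)
  then have below: "(\<lambda>n. p (grid a b n (k n))) \<longlonglongrightarrow> p t"
    by (rule continuous_on_tendsto_compose[OF assms(2)])
      (use t grid_in_interval[OF assms(1) k(1)] in auto)
  have "p (grid a b n (k n)) \<le> grid_max p a b n" for n
    unfolding grid_max_def using k(1) by (intro Max_ge) auto
  then show ?thesis
    unfolding t(2)
    by (intro real_tendsto_sandwich[OF _ _ below tendsto_const])
      (use grid_max_le_path_sup[OF assms] t in auto)
qed

lemma path_sup_neq_of_neq_on_tails:
  fixes p :: "real \<Rightarrow> real"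
  assumes cont: "continuous_on {0..s} p" and "0 < s" "p 0 < \<gamma>"
    and after: "\<And>n. path_sup p (s / real (n + 2)) s \<noteq> \<gamma>"
  shows "path_sup p 0 s \<noteq> \<gamma>"
proof -
  have "\<forall>\<^sub>F t in at 0 within {0..s}. p t < \<gamma>"
    using cont \<open>0 < s\<close> \<open>p 0 < \<gamma>\<close> by (intro order_tendstoD(2)) (auto simp: continuous_on_def)
  then obtain \<eta> where \<eta>: "0 < \<eta>" "\<And>t. t \<in> {0..s} \<Longrightarrow> t \<noteq> 0 \<Longrightarrow> \<bar>t\<bar> < \<eta> \<Longrightarrow> p t < \<gamma>"
    unfolding eventually_at dist_real_def by auto
  obtain n where n: "s / \<eta> < real n" using reals_Archimedean2 by blast
  define b where "b = s / real (n + 2)"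
  have b: "0 < b" "b < \<eta>" "b \<le> s"
    using n \<eta>(1) \<open>0 < s\<close> by (auto simp: b_def field_simps)
  obtain t where t: "t \<in> {0..b}" "path_sup p 0 b = p t"
    using path_sup_attained[of 0 b p] b continuous_on_subset[OF cont, of "{0..b}"] by auto
  have "path_sup p 0 b < \<gamma>"
    using t b \<eta>(2)[of t] \<open>p 0 < \<gamma>\<close> by (cases "t = 0") auto
  moreover have "path_sup p 0 s = max (path_sup p 0 b) (path_sup p b s)"
    using b cont by (intro path_sup_split) auto
  ultimately show ?thesis using after[of n] by (auto simp: b_def)
qed

lemma exists_above_path_sup:
  fixes p :: "real \<Rightarrow> real"
  assumes "0 < a" and cont: "continuous_on {0..a} p" and stays: "\<forall>t\<in>{0..<a}. p t \<in> U"
    and not_sup: "bdd_above U \<Longrightarrow> path_sup p 0 a \<noteq> Sup U"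
  shows "\<exists>hi\<in>U. path_sup p 0 a < hi"
proof (cases "bdd_above U")
  case True
  obtain t where t: "t \<in> {0..a}" "path_sup p 0 a = p t"
    using path_sup_attained[OF _ cont] \<open>0 < a\<close> by auto
  have closure: "closure {0..<a} = {0..a}" using \<open>0 < a\<close> by simp
  have "p t \<le> Sup U"
    by (rule continuous_le_on_closure[where S="{0..<a}"])
      (use t cont stays cSup_upper[OF _ True] in \<open>simp_all add: closure\<close>)
  with t not_sup[OF True] have "path_sup p 0 a < Sup U" by auto
  moreover have "U \<noteq> {}" using stays \<open>0 < a\<close> by auto
  ultimately show ?thesis using less_cSup_iff[OF _ True] by blast
next
  case False
  show ?thesis
  proof (rule ccontr)
    assume "\<not> ?thesis"
    then have "bdd_above U" by (intro bdd_above.I[of _ "path_sup p 0 a"]) (auto simp: not_less)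
    with False show False ..
  qed
qed

lemma eventually_tube_in_interval:
  fixes p :: "real \<Rightarrow> real"
  assumes U: "is_interval U" "lo \<in> U" "hi \<in> U" and cont: "continuous_on {0..a} p"
    and lo: "lo < - path_sup (\<lambda>t. - p t) 0 a" and hi: "path_sup p 0 a < hi"
  shows "\<forall>\<^sub>F \<delta> in at_right 0. \<forall>t\<in>{0..<a}. \<forall>x. \<bar>x - p t\<bar> \<le> \<delta> \<longrightarrow> x \<in> U"
  unfolding eventually_at_right_field
proof (intro exI[of _ "min (hi - path_sup p 0 a) (- path_sup (\<lambda>t. - p t) 0 a - lo)"] conjI allI impI ballI)
  show "0 < min (hi - path_sup p 0 a) (- path_sup (\<lambda>t. - p t) 0 a - lo)"
    using lo hi by simp
  fix \<delta> t x
  assume \<delta>: "0 < \<delta>" "\<delta> < min (hi - path_sup p 0 a) (- path_sup (\<lambda>t. - p t) 0 a - lo)"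
    and t: "t \<in> {0..<a}" and x: "\<bar>x - p t\<bar> \<le> \<delta>"
  have "p t \<le> path_sup p 0 a" "- p t \<le> path_sup (\<lambda>t. - p t) 0 a"
    using t path_sup_upper[OF cont] path_sup_upper[OF continuous_on_minus[OF cont]] by auto
  then have "lo \<le> x" "x \<le> hi" using \<delta> x by auto
  then show "x \<in> U" by (rule mem_is_interval_1_I[OF U])
qed

lemma eventually_tube_if_extrema_inside:
  fixes p :: "real \<Rightarrow> real"
  assumes U: "is_interval U" and "0 < a" and cont: "continuous_on {0..a} p"
    and stays: "\<forall>t\<in>{0..<a}. p t \<in> U"
    and max: "bdd_above U \<Longrightarrow> path_sup p 0 a \<noteq> Sup U"
    and min: "bdd_below U \<Longrightarrow> path_sup (\<lambda>t. - p t) 0 a \<noteq> - Inf U"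
  shows "\<forall>\<^sub>F \<delta> in at_right 0. \<forall>t\<in>{0..<a}. \<forall>x. \<bar>x - p t\<bar> \<le> \<delta> \<longrightarrow> x \<in> U"
proof -
  obtain hi where hi: "hi \<in> U" "path_sup p 0 a < hi"
    using exists_above_path_sup[OF \<open>0 < a\<close> cont stays max] by blast
  \<comment> \<open>the lower bound is the upper bound for the reflected path in the reflected interval\<close>
  have "\<exists>lo'\<in>uminus ` U. path_sup (\<lambda>t. - p t) 0 a < lo'"
  proof (rule exists_above_path_sup[OF \<open>0 < a\<close> continuous_on_minus[OF cont]])
    show "\<forall>t\<in>{0..<a}. - p t \<in> uminus ` U" using stays by simp
    assume "bdd_above (uminus ` U)"
    then show "path_sup (\<lambda>t. - p t) 0 a \<noteq> Sup (uminus ` U)"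
      using min by (simp add: bdd_above_uminus Inf_real_def)
  qed
  then obtain lo where lo: "lo \<in> U" "lo < - path_sup (\<lambda>t. - p t) 0 a" by force
  show ?thesis by (rule eventually_tube_in_interval[OF U lo(1) hi(1) cont lo(2) hi(2)])
qed

text \<open>Sampling the path at rational times only would not do, as it may touch an open end of \<open>U\<close>
  at an irrational time; the running extrema catch this because they are attained.\<close>

lemma stays_in_interval_iff_path_sup:
  fixes p :: "real \<Rightarrow> real"
  assumes U: "is_interval U" and cont: "continuous_on {0..a} p"
  shows "(\<forall>t\<in>{0..<a}. p t \<in> U) \<longleftrightarrow>
    (\<forall>b\<in>{0..<a} \<inter> \<rat>. path_sup p 0 b \<in> U \<and> - path_sup (\<lambda>t. - p t) 0 b \<in> U)"
proof safe
  fix b assume stays: "\<forall>t\<in>{0..<a}. p t \<in> U" and b: "b \<in> {0..<a}"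
  have cont_b: "continuous_on {0..b} p"
    using b by (intro continuous_on_subset[OF cont]) auto
  obtain t where "t \<in> {0..b}" "path_sup p 0 b = p t"
    using path_sup_attained[OF _ cont_b] b by auto
  then show "path_sup p 0 b \<in> U" using stays b by auto
  obtain t' where "t' \<in> {0..b}" "path_sup (\<lambda>t. - p t) 0 b = - p t'"
    using path_sup_attained[OF _ continuous_on_minus[OF cont_b]] b by auto
  then show "- path_sup (\<lambda>t. - p t) 0 b \<in> U" using stays b by auto
next
  fix t assume sups: "\<forall>b\<in>{0..<a} \<inter> \<rat>. path_sup p 0 b \<in> U \<and> - path_sup (\<lambda>t. - p t) 0 b \<in> U"
    and t: "t \<in> {0..<a}"
  obtain b where b: "b \<in> \<rat>" "t < b" "b < a" using Rats_dense_in_real[of t a] t by auto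
  have cont_b: "continuous_on {0..b} p"
    using b by (intro continuous_on_subset[OF cont]) auto
  have le: "- path_sup (\<lambda>t. - p t) 0 b \<le> p t" "p t \<le> path_sup p 0 b"
    using t b path_sup_upper[OF cont_b] path_sup_upper[OF continuous_on_minus[OF cont_b]]
    by (auto simp: minus_le_iff)
  have mem: "- path_sup (\<lambda>t. - p t) 0 b \<in> U" "path_sup p 0 b \<in> U"
    using sups t b by auto
  show "p t \<in> U" by (rule mem_is_interval_1_I[OF U mem le])
qed

lemma normal_density_le:
  assumes "0 < \<sigma>"
  shows "normal_density \<mu> \<sigma> x \<le> 1 / sqrt (2 * pi * \<sigma>\<^sup>2)"
proof -
  have "exp (- ((x - \<mu>)\<^sup>2 / (2 * \<sigma>\<^sup>2))) \<le> 1" by simp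
  then show ?thesis by (simp add: normal_density_def divide_right_mono)
qed

lemma emeasure_distr_interval_le:
  fixes X :: "'a \<Rightarrow> real"
  assumes distr: "distributed M lborel X (\<lambda>x. ennreal (g x))"
    and bound: "\<And>x. g x \<le> C" "0 \<le> C" and "a \<le> b"
  shows "emeasure (distr M borel X) {a<..b} \<le> ennreal (C * (b - a))"
proof -
  have "emeasure (distr M borel X) {a<..b} = emeasure (distr M lborel X) {a<..b}"
    using distributed_measurable[OF distr] by (simp add: emeasure_distr)
  also have "\<dots> = emeasure (density lborel g) {a<..b}"
    using distributed_distr_eq_density[OF distr] by simp
  also have "\<dots> = (\<integral>\<^sup>+x. ennreal (g x) * indicator {a<..b} x \<partial>lborel)"
    by (rule emeasure_density) (use distr in \<open>auto dest: distributed_borel_measurable\<close>)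
  also have "\<dots> \<le> (\<integral>\<^sup>+x. ennreal C * indicator {a<..b} x \<partial>lborel)"
    using bound by (intro nn_integral_mono mult_right_mono) auto
  also have "\<dots> = ennreal (C * (b - a))"
    using bound \<open>a \<le> b\<close> by (simp add: nn_integral_cmult_indicator ennreal_mult)
  finally show ?thesis .
qed

lemma (in prob_space) prob_sum_in_interval_le:
  fixes X Y :: "'a \<Rightarrow> real"
  assumes indep: "indep_var borel X borel Y"
    and distr: "distributed M lborel X (\<lambda>x. ennreal (g x))"
    and bound: "\<And>x. g x \<le> C" "0 \<le> C"
    and "a \<le> b"
  shows "prob {\<omega>\<in>space M. X \<omega> + Y \<omega> \<in> {a<..b}} \<le> C * (b - a)"
proof -
  have [measurable]: "X \<in> borel_measurable M" "Y \<in> borel_measurable M"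
    using indep by (auto dest: indep_var_rv1 indep_var_rv2)
  define PX where "PX = distr M borel X"
  define PY where "PY = distr M borel Y"
  interpret P: pair_prob_space PX PY
    unfolding PX_def PY_def
    by (simp add: pair_prob_space_def pair_sigma_finite_def prob_space_distr
        prob_space_imp_sigma_finite)
  define A where "A = {z :: real \<times> real. fst z + snd z \<in> {a<..b}}"
  have A_sets[measurable]: "A \<in> sets (borel \<Otimes>\<^sub>M borel)"
  proof -
    have "A = {z \<in> space (borel \<Otimes>\<^sub>M borel). fst z + snd z \<in> {a<..b}}"
      by (simp add: A_def space_pair_measure)
    also have "\<dots> \<in> sets (borel \<Otimes>\<^sub>M borel)" by measurable
    finally show ?thesis .
  qed
  have "emeasure M {\<omega>\<in>space M. X \<omega> + Y \<omega> \<in> {a<..b}}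
      = emeasure (distr M (borel \<Otimes>\<^sub>M borel) (\<lambda>\<omega>. (X \<omega>, Y \<omega>))) A"
    by (subst emeasure_distr[OF _ A_sets], measurable)
      (auto simp: A_def intro!: arg_cong[where f="emeasure M"])
  also have "\<dots> = emeasure (PX \<Otimes>\<^sub>M PY) A"
    using indep unfolding indep_var_distribution_eq PX_def PY_def by simp
  also have "\<dots> = (\<integral>\<^sup>+y. emeasure PX ((\<lambda>x. (x, y)) -` A) \<partial>PY)"
    by (rule P.emeasure_pair_measure_alt2) (simp add: PX_def PY_def)
  also have "\<dots> \<le> (\<integral>\<^sup>+y. ennreal (C * (b - a)) \<partial>PY)"
  proof (rule nn_integral_mono)
    fix y
    have "(\<lambda>x. (x, y)) -` A = {a - y<..b - y}" by (auto simp: A_def)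
    then show "emeasure PX ((\<lambda>x. (x, y)) -` A) \<le> ennreal (C * (b - a))"
      using emeasure_distr_interval_le[OF distr bound, of "a - y" "b - y"] \<open>a \<le> b\<close>
      by (simp add: PX_def)
  qed
  also have "\<dots> = ennreal (C * (b - a))"
    using P.M2.emeasure_space_1 by simp
  finally show ?thesis
    using bound \<open>a \<le> b\<close> by (simp add: emeasure_eq_measure ennreal_le_iff)
qed

lemma (in prob_space) prob_level_le_of_anticoncentrated_approx:
  fixes X :: "nat \<Rightarrow> 'a \<Rightarrow> real"
  assumes [measurable]: "\<And>n. X n \<in> borel_measurable M"
    and lim: "\<And>\<omega>. \<omega> \<in> space M \<Longrightarrow> (\<lambda>n. X n \<omega>) \<longlonglongrightarrow> Y \<omega>"
    and anti: "\<And>n. prob {\<omega>\<in>space M. X n \<omega> \<in> {\<gamma> - \<epsilon><..\<gamma> + \<epsilon>}} \<le> C * \<epsilon>" and "0 < \<epsilon>"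
  shows "prob {\<omega>\<in>space M. Y \<omega> = \<gamma>} \<le> C * \<epsilon>"
proof -
  \<comment> \<open>a path with \<open>Y = \<gamma>\<close> has \<open>X n\<close> in the window from some \<open>N\<close> on\<close>
  define D where "D N = {\<omega>\<in>space M. \<forall>n\<ge>N. X n \<omega> \<in> {\<gamma> - \<epsilon><..\<gamma> + \<epsilon>}}" for N
  have [measurable]: "D N \<in> events" for N unfolding D_def by measurable
  have "prob (D N) \<le> C * \<epsilon>" for N
  proof -
    have "prob (D N) \<le> prob {\<omega>\<in>space M. X N \<omega> \<in> {\<gamma> - \<epsilon><..\<gamma> + \<epsilon>}}"
      by (rule finite_measure_mono) (auto simp: D_def)
    also have "\<dots> \<le> C * \<epsilon>" by (rule anti)
    finally show ?thesis .
  qed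
  moreover have "(\<lambda>N. prob (D N)) \<longlonglongrightarrow> prob (\<Union>N. D N)"
    by (rule finite_Lim_measure_incseq) (auto simp: incseq_def D_def)
  ultimately have "prob (\<Union>N. D N) \<le> C * \<epsilon>"
    by (intro LIMSEQ_le_const2) auto
  moreover have "{\<omega>\<in>space M. Y \<omega> = \<gamma>} \<subseteq> (\<Union>N. D N)"
  proof
    fix \<omega> assume "\<omega> \<in> {\<omega>\<in>space M. Y \<omega> = \<gamma>}"
    then have \<omega>: "\<omega> \<in> space M" "(\<lambda>n. X n \<omega>) \<longlonglongrightarrow> \<gamma>" using lim by auto
    have "\<forall>\<^sub>F n in sequentially. \<gamma> - \<epsilon> < X n \<omega>"
      using order_tendstoD(1)[OF \<omega>(2)] \<open>0 < \<epsilon>\<close> by simp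
    moreover have "\<forall>\<^sub>F n in sequentially. X n \<omega> < \<gamma> + \<epsilon>"
      using order_tendstoD(2)[OF \<omega>(2)] \<open>0 < \<epsilon>\<close> by simp
    ultimately have "\<forall>\<^sub>F n in sequentially. X n \<omega> \<in> {\<gamma> - \<epsilon><..\<gamma> + \<epsilon>}"
      by eventually_elim auto
    then show "\<omega> \<in> (\<Union>N. D N)" using \<omega>(1) by (auto simp: D_def eventually_sequentially)
  qed
  then have "prob {\<omega>\<in>space M. Y \<omega> = \<gamma>} \<le> prob (\<Union>N. D N)" by (intro finite_measure_mono) auto
  ultimately show ?thesis by simp
qed

lemma (in prob_space) AE_neq_of_anticoncentrated_approx:
  fixes X :: "nat \<Rightarrow> 'a \<Rightarrow> real"
  assumes meas: "\<And>n. X n \<in> borel_measurable M"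
    and lim: "\<And>\<omega>. \<omega> \<in> space M \<Longrightarrow> (\<lambda>n. X n \<omega>) \<longlonglongrightarrow> Y \<omega>"
    and anti: "\<And>n \<epsilon>. 0 < \<epsilon> \<Longrightarrow> prob {\<omega>\<in>space M. X n \<omega> \<in> {\<gamma> - \<epsilon><..\<gamma> + \<epsilon>}} \<le> C * \<epsilon>"
  shows "AE \<omega> in M. Y \<omega> \<noteq> \<gamma>"
proof -
  have [measurable]: "Y \<in> borel_measurable M"
    by (rule borel_measurable_LIMSEQ_real[OF lim meas])
  define Z where "Z = {\<omega>\<in>space M. Y \<omega> = \<gamma>}"
  have "prob Z \<le> 0 + e" if "0 < e" for e
  proof -
    have pos: "0 < e / (\<bar>C\<bar> + 1)" using that by (intro divide_pos_pos) auto
    have "prob Z \<le> C * (e / (\<bar>C\<bar> + 1))"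
      unfolding Z_def by (rule prob_level_le_of_anticoncentrated_approx[OF meas lim anti[OF pos] pos])
    also have "\<dots> \<le> (\<bar>C\<bar> + 1) * (e / (\<bar>C\<bar> + 1))"
      using that by (intro mult_right_mono) auto
    also have "\<dots> = e" by (simp add: add_pos_nonneg)
    finally show ?thesis by simp
  qed
  then have "prob Z = 0"
    using field_le_epsilon[of "prob Z" 0] measure_nonneg[of M Z] by simp
  then show ?thesis
    by (subst AE_iff_measurable[where N=Z]) (auto simp: Z_def emeasure_eq_measure)
qed

lemma tendsto_at_right_0_antimono:
  fixes \<phi> :: "real \<Rightarrow> real"
  assumes anti: "\<And>\<delta> \<delta>'. 0 < \<delta> \<Longrightarrow> \<delta> \<le> \<delta>' \<Longrightarrow> \<phi> \<delta>' \<le> \<phi> \<delta>"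
    and le: "\<And>\<delta>. 0 < \<delta> \<Longrightarrow> \<phi> \<delta> \<le> m"
    and seq: "(\<lambda>n. \<phi> (1 / Suc n)) \<longlonglongrightarrow> m"
  shows "(\<phi> \<longlongrightarrow> m) (at_right 0)"
proof (rule order_tendstoI)
  fix a assume "a < m"
  then obtain n where n: "a < \<phi> (1 / Suc n)"
    using order_tendstoD(1)[OF seq] by (auto simp: eventually_sequentially)
  show "\<forall>\<^sub>F \<delta> in at_right 0. a < \<phi> \<delta>"
    unfolding eventually_at_right_field
    using n anti[of _ "1 / Suc n"] by (intro exI[of _ "1 / Suc n"]) (auto intro: less_le_trans)
next
  fix a assume "m < a"
  show "\<forall>\<^sub>F \<delta> in at_right 0. \<phi> \<delta> < a"
    using eventually_at_right_less[of 0]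
  proof eventually_elim
    case (elim \<delta>)
    then show ?case using le[of \<delta>] \<open>m < a\<close> by simp
  qed
qed

lemma (in finite_measure) tendsto_measure_at_right_0_antimono:
  fixes A :: "real \<Rightarrow> 'a set"
  assumes sets: "\<And>\<delta>. 0 < \<delta> \<Longrightarrow> A \<delta> \<in> sets M" and L: "L \<in> sets M"
    and antimono: "\<And>\<delta> \<delta>'. 0 < \<delta> \<Longrightarrow> \<delta> \<le> \<delta>' \<Longrightarrow> A \<delta>' \<subseteq> A \<delta>"
    and sub: "\<And>\<delta>. 0 < \<delta> \<Longrightarrow> A \<delta> \<subseteq> L"
    and AE: "AE x in M. x \<in> L \<longrightarrow> (\<forall>\<^sub>F \<delta> in at_right 0. x \<in> A \<delta>)"
  shows "((\<lambda>\<delta>. measure M (A \<delta>)) \<longlongrightarrow> measure M L) (at_right 0)"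
proof (rule tendsto_at_right_0_antimono)
  define D where "D n = A (1 / Suc n)" for n
  have D_sets: "range D \<subseteq> sets M" using sets by (auto simp: D_def)
  have "incseq D"
    unfolding incseq_def D_def by (intro allI impI antimono) (auto simp: frac_le)
  then have "(\<lambda>n. measure M (D n)) \<longlonglongrightarrow> measure M (\<Union>n. D n)"
    using D_sets by (rule finite_Lim_measure_incseq[rotated])
  moreover have "AE x in M. x \<in> (\<Union>n. D n) \<longleftrightarrow> x \<in> L"
    using AE
  proof eventually_elim
    case (elim x)
    show ?case
    proof
      assume "x \<in> L"
      then obtain b where b: "0 < b" "\<And>\<delta>. 0 < \<delta> \<Longrightarrow> \<delta> < b \<Longrightarrow> x \<in> A \<delta>"
        using elim unfolding eventually_at_right_field by blast
      obtain n where "1 / Suc n < b" using reals_Archimedean[OF \<open>0 < b\<close>]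
        by (auto simp: inverse_eq_divide)
      then have "x \<in> D n" using b(2)[of "1 / Suc n"] by (simp add: D_def)
      then show "x \<in> (\<Union>n. D n)" by blast
    next
      assume "x \<in> (\<Union>n. D n)"
      then obtain n where "x \<in> A (1 / Suc n)" by (auto simp: D_def)
      then show "x \<in> L" using sub[of "1 / Suc n"] by auto
    qed
  qed
  then have "measure M (\<Union>n. D n) = measure M L"
    using D_sets L by (intro measure_eq_AE) auto
  ultimately show "(\<lambda>n. measure M (A (1 / Suc n))) \<longlonglongrightarrow> measure M L"
    by (simp add: D_def)
next
  show "measure M (A \<delta>') \<le> measure M (A \<delta>)" if "0 < \<delta>" "\<delta> \<le> \<delta>'" for \<delta> \<delta>'
    using that by (intro finite_measure_mono antimono sets)
  show "measure M (A \<delta>) \<le> measure M L" if "0 < \<delta>" for \<delta>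
    using that by (intro finite_measure_mono sub L)
qed

lemma borel_measurable_path_sup:
  fixes X :: "real \<Rightarrow> 'a \<Rightarrow> real"
  assumes [measurable]: "\<And>t. X t \<in> borel_measurable M"
    and cont: "\<And>\<omega>. \<omega> \<in> space M \<Longrightarrow> continuous_on {a..b} (\<lambda>t. X t \<omega>)" and "a \<le> b"
  shows "(\<lambda>\<omega>. path_sup (\<lambda>t. X t \<omega>) a b) \<in> borel_measurable M"
proof (rule borel_measurable_LIMSEQ_real)
  show "(\<lambda>n. grid_max (\<lambda>t. X t \<omega>) a b n) \<longlonglongrightarrow> path_sup (\<lambda>t. X t \<omega>) a b" if "\<omega> \<in> space M" for \<omega>
    using grid_max_tendsto_path_sup[OF \<open>a \<le> b\<close> cont[OF that]] .
  show "(\<lambda>\<omega>. grid_max (\<lambda>t. X t \<omega>) a b n) \<in> borel_measurable M" for n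
    unfolding grid_max_def by measurable
qed

lemma sets_stays_in_interval:
  fixes X :: "real \<Rightarrow> 'a \<Rightarrow> real"
  assumes [measurable]: "\<And>t. X t \<in> borel_measurable M"
    and cont: "\<And>\<omega>. \<omega> \<in> space M \<Longrightarrow> continuous_on {0..a} (\<lambda>t. X t \<omega>)"
    and U: "is_interval U"
  shows "{\<omega>\<in>space M. \<forall>t\<in>{0..<a}. X t \<omega> \<in> U} \<in> sets M"
proof -
  have [measurable]: "U \<in> sets borel" using U by (rule real_interval_borel_measurable)
  have "{\<omega>\<in>space M. \<forall>t\<in>{0..<a}. X t \<omega> \<in> U} = {\<omega>\<in>space M. \<forall>b\<in>{0..<a} \<inter> \<rat>.
      path_sup (\<lambda>t. X t \<omega>) 0 b \<in> U \<and> - path_sup (\<lambda>t. - X t \<omega>) 0 b \<in> U}"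
    using stays_in_interval_iff_path_sup[OF U cont] by blast
  also have "\<dots> \<in> sets M"
  proof (rule sets.sets_Collect_countable_All')
    fix b assume "b \<in> {0..<a} \<inter> \<rat>"
    then have cont_b: "continuous_on {0..b} (\<lambda>t. X t \<omega>)" if "\<omega> \<in> space M" for \<omega>
      by (intro continuous_on_subset[OF cont[OF that]]) auto
    have [measurable]: "(\<lambda>\<omega>. path_sup (\<lambda>t. X t \<omega>) 0 b) \<in> borel_measurable M"
      "(\<lambda>\<omega>. path_sup (\<lambda>t. - X t \<omega>) 0 b) \<in> borel_measurable M"
      using \<open>b \<in> {0..<a} \<inter> \<rat>\<close> cont_b continuous_on_minus[OF cont_b]
      by (intro borel_measurable_path_sup; simp)+
    show "{\<omega>\<in>space M. path_sup (\<lambda>t. X t \<omega>) 0 b \<in> U \<and> - path_sup (\<lambda>t. - X t \<omega>) 0 b \<in> U}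
        \<in> sets M"
      by measurable
  qed (rule countable_subset[OF Int_lower2 countable_rat])
  finally show ?thesis .
qed

section \<open>The running maximum of Brownian motion\<close>

lemma
  assumes "is_BM M u B"
  shows is_BM_prob_space: "prob_space M"
    and is_BM_measurable: "B t \<in> borel_measurable M"
    and is_BM_start: "\<omega> \<in> space M \<Longrightarrow> B 0 \<omega> = u"
    and is_BM_continuous_on: "\<omega> \<in> space M \<Longrightarrow> 0 \<le> a \<Longrightarrow> continuous_on {a..b} (\<lambda>t. B t \<omega>)"
    and is_BM_increment: "0 \<le> s \<Longrightarrow> s < t \<Longrightarrow>
      distributed M lborel (\<lambda>\<omega>. B t \<omega> - B s \<omega>) (\<lambda>x. ennreal (normal_density 0 (sqrt (t - s)) x))"
    and is_BM_indep_increments: "sorted_wrt (<) ts \<Longrightarrow> (\<forall>t\<in>set ts. 0 \<le> t) \<Longrightarrow>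
      prob_space.indep_vars M (\<lambda>_. borel) (\<lambda>i \<omega>. B (ts ! Suc i) \<omega> - B (ts ! i) \<omega>) {..<length ts - 1}"
  using assms unfolding is_BM_def by (auto intro: continuous_on_subset)

lemma is_BM_uminus:
  assumes BM: "is_BM M u B"
  shows "is_BM M (- u) (\<lambda>t \<omega>. - B t \<omega>)"
proof -
  interpret prob_space M using is_BM_prob_space[OF BM] .
  have "distributed M lborel (\<lambda>\<omega>. - B t \<omega> - - B s \<omega>)
      (\<lambda>x. ennreal (normal_density 0 (sqrt (t - s)) x))" if "0 \<le> s" "s < t" for s t
    using normal_density_affine[OF is_BM_increment[OF BM that], of "-1" 0] that by simp
  moreover have "indep_vars (\<lambda>_. borel) (\<lambda>i \<omega>. - B (ts ! Suc i) \<omega> - - B (ts ! i) \<omega>) {..<length ts - 1}"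
    if "sorted_wrt (<) ts" "\<forall>t\<in>set ts. 0 \<le> t" for ts
    using indep_vars_compose2[OF is_BM_indep_increments[OF BM that], of "\<lambda>_ x. - x"] by simp
  ultimately show ?thesis
    using BM unfolding is_BM_def by (auto intro: continuous_on_minus)
qed

lemma BM_indep_increments_seq:
  fixes \<tau> :: "nat \<Rightarrow> real"
  assumes BM: "is_BM M u B" and \<tau>: "strict_mono \<tau>" "0 \<le> \<tau> 0"
  shows "prob_space.indep_vars M (\<lambda>_. borel) (\<lambda>i \<omega>. B (\<tau> (Suc i)) \<omega> - B (\<tau> i) \<omega>) {..<m}"
proof -
  interpret prob_space M using is_BM_prob_space[OF BM] .
  define ts where "ts = map \<tau> [0..<Suc m]"
  have ts_nth: "ts ! i = \<tau> i" if "i \<le> m" for i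
    using that by (simp add: ts_def nth_map_upt del: upt_Suc)
  have length_ts: "length ts = Suc m" by (simp add: ts_def)
  have sorted: "sorted_wrt (<) ts"
    unfolding sorted_wrt_iff_nth_less length_ts
    by (auto simp: ts_nth intro: strict_monoD[OF \<tau>(1)])
  have "\<forall>t\<in>set ts. 0 \<le> t"
    using \<tau>(2) strict_mono_less_eq[OF \<tau>(1)] by (auto simp: ts_def intro: order_trans)
  then have "indep_vars (\<lambda>_. borel) (\<lambda>i \<omega>. B (ts ! Suc i) \<omega> - B (ts ! i) \<omega>) {..<m}"
    using is_BM_indep_increments[OF BM sorted] by (simp add: length_ts)
  then show ?thesis
    by (rule indep_vars_cong[THEN iffD1, rotated 3]) (auto simp: ts_nth)
qed

lemma BM_first_increment_indep_later_max:
  fixes g :: "nat \<Rightarrow> real" and n :: nat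
  assumes BM: "is_BM M u B" and g: "strict_mono g" "0 < g 0"
  shows "prob_space.indep_var M borel (\<lambda>\<omega>. B (g 0) \<omega> - B 0 \<omega>)
    borel (\<lambda>\<omega>. MAX k\<in>{..n}. B (g k) \<omega> - B (g 0) \<omega>)"
proof -
  interpret prob_space M using is_BM_prob_space[OF BM] .
  define incr where "incr i \<omega> = B (case_nat 0 g (Suc i)) \<omega> - B (case_nat 0 g i) \<omega>" for i \<omega>
  have "strict_mono (case_nat 0 g)"
    using g by (auto simp: strict_mono_Suc_iff split: nat.split)
  then have "indep_vars (\<lambda>_. borel) incr {..<Suc n}"
    unfolding incr_def by (rule BM_indep_increments_seq[OF BM]) simp
  then have indep_restrict: "indep_var (PiM {0} (\<lambda>_. borel)) (\<lambda>\<omega>. \<lambda>i\<in>{0}. incr i \<omega>)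
      (PiM {1..<Suc n} (\<lambda>_. borel)) (\<lambda>\<omega>. \<lambda>i\<in>{1..<Suc n}. incr i \<omega>)"
    by (rule indep_var_restrict) auto
  \<comment> \<open>the later maximum is a function of the increments with index \<open>\<ge> 1\<close>, through their partial sums\<close>
  define F where "F z = (MAX k\<in>{..n}. \<Sum>i<k. z (Suc i))" for z :: "nat \<Rightarrow> real"
  have F_measurable: "F \<in> borel_measurable (PiM {1..<Suc n} (\<lambda>_. borel))"
    unfolding F_def
  proof (rule borel_measurable_Max)
    fix k assume "k \<in> {..n}"
    then have "(\<lambda>z. z (Suc i)) \<in> borel_measurable (PiM {1..<Suc n} (\<lambda>_. borel))" if "i < k" for i
      using that by (intro measurable_component_singleton) auto
    then show "(\<lambda>z. \<Sum>i<k. z (Suc i)) \<in> borel_measurable (PiM {1..<Suc n} (\<lambda>_. (borel::real measure)))"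
      by (intro borel_measurable_sum) auto
  qed simp
  have "indep_var borel ((\<lambda>z. z 0) \<circ> (\<lambda>\<omega>. \<lambda>i\<in>{0}. incr i \<omega>))
      borel (F \<circ> (\<lambda>\<omega>. \<lambda>i\<in>{1..<Suc n}. incr i \<omega>))"
    by (rule indep_var_compose[OF indep_restrict measurable_component_singleton F_measurable]) simp
  moreover have "(\<lambda>z. z 0) \<circ> (\<lambda>\<omega>. \<lambda>i\<in>{0}. incr i \<omega>) = (\<lambda>\<omega>. B (g 0) \<omega> - B 0 \<omega>)"
    by (auto simp: incr_def)
  moreover have "(F \<circ> (\<lambda>\<omega>. \<lambda>i\<in>{1..<Suc n}. incr i \<omega>)) \<omega> = (MAX k\<in>{..n}. B (g k) \<omega> - B (g 0) \<omega>)"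
    for \<omega>
  proof -
    have "(\<Sum>i<k. (\<lambda>i\<in>{1..<Suc n}. incr i \<omega>) (Suc i)) = B (g k) \<omega> - B (g 0) \<omega>" if "k \<le> n" for k
    proof -
      have "(\<Sum>i<k. (\<lambda>i\<in>{1..<Suc n}. incr i \<omega>) (Suc i)) = (\<Sum>i<k. B (g (Suc i)) \<omega> - B (g i) \<omega>)"
        using that by (intro sum.cong) (auto simp: incr_def)
      then show ?thesis using sum_lessThan_telescope[of "\<lambda>i. B (g i) \<omega>" k] by simp
    qed
    then show ?thesis unfolding F_def o_def by (intro arg_cong[where f=Max] image_cong) auto
  qed
  ultimately show ?thesis by (simp add: comp_def)
qed

lemma BM_grid_max_anticoncentration:
  assumes BM: "is_BM M u B" and r: "0 < r" "r < s" and "0 \<le> \<epsilon>"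
  shows "measure M {\<omega>\<in>space M. grid_max (\<lambda>t. B t \<omega>) r s n \<in> {\<gamma> - \<epsilon><..\<gamma> + \<epsilon>}}
    \<le> 2 * \<epsilon> / sqrt (2 * pi * r)"
proof -
  interpret prob_space M using is_BM_prob_space[OF BM] .
  define g where "g = grid r s n"
  have g_0: "g 0 = r" by (simp add: g_def grid_def)
  define X where "X = (\<lambda>\<omega>. B r \<omega> - B 0 \<omega>)"
  define Y where "Y = (\<lambda>\<omega>. MAX k\<in>{..Suc n}. B (g k) \<omega> - B (g 0) \<omega>)"
  have indep: "indep_var borel X borel Y"
    using BM_first_increment_indep_later_max[OF BM strict_mono_grid[OF r(2)], of n "Suc n"] r
    by (simp add: X_def Y_def g_def g_0[unfolded g_def])
  have distr: "distributed M lborel X (\<lambda>x. ennreal (normal_density 0 (sqrt r) x))"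
    using is_BM_increment[OF BM order_refl r(1)] by (simp add: X_def)
  have "grid_max (\<lambda>t. B t \<omega>) r s n = u + (X \<omega> + Y \<omega>)" if "\<omega> \<in> space M" for \<omega>
  proof -
    have "grid_max (\<lambda>t. B t \<omega>) r s n = (MAX k\<in>{..Suc n}. (B (g k) \<omega> - B (g 0) \<omega>) + B r \<omega>)"
      by (simp add: grid_max_def g_def g_0[unfolded g_def])
    also have "\<dots> = Y \<omega> + B r \<omega>"
      unfolding Y_def by (rule Max_add_commute) auto
    finally show ?thesis using is_BM_start[OF BM that] by (simp add: X_def)
  qed
  then have "{\<omega>\<in>space M. grid_max (\<lambda>t. B t \<omega>) r s n \<in> {\<gamma> - \<epsilon><..\<gamma> + \<epsilon>}}
      = {\<omega>\<in>space M. X \<omega> + Y \<omega> \<in> {\<gamma> - u - \<epsilon><..\<gamma> - u + \<epsilon>}}"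
    by auto
  also have "prob \<dots> \<le> 1 / sqrt (2 * pi * (sqrt r)\<^sup>2) * ((\<gamma> - u + \<epsilon>) - (\<gamma> - u - \<epsilon>))"
    using r \<open>0 \<le> \<epsilon>\<close>
    by (intro prob_sum_in_interval_le[OF indep distr] normal_density_le) auto
  finally show ?thesis using r by simp
qed

lemma AE_BM_path_sup_neq_of_pos:
  assumes BM: "is_BM M u B" and r: "0 < r" "r < s"
  shows "AE \<omega> in M. path_sup (\<lambda>t. B t \<omega>) r s \<noteq> \<gamma>"
proof -
  interpret prob_space M using is_BM_prob_space[OF BM] .
  have [measurable]: "\<And>t. B t \<in> borel_measurable M" using is_BM_measurable[OF BM] .
  show ?thesis
  proof (rule AE_neq_of_anticoncentrated_approx)
    show "(\<lambda>\<omega>. grid_max (\<lambda>t. B t \<omega>) r s n) \<in> borel_measurable M" for n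
      unfolding grid_max_def by measurable
    show "(\<lambda>n. grid_max (\<lambda>t. B t \<omega>) r s n) \<longlonglongrightarrow> path_sup (\<lambda>t. B t \<omega>) r s" if "\<omega> \<in> space M" for \<omega>
      using r by (intro grid_max_tendsto_path_sup is_BM_continuous_on[OF BM that]) auto
    show "prob {\<omega>\<in>space M. grid_max (\<lambda>t. B t \<omega>) r s n \<in> {\<gamma> - \<epsilon><..\<gamma> + \<epsilon>}}
        \<le> 2 / sqrt (2 * pi * r) * \<epsilon>" if "0 < \<epsilon>" for n \<epsilon>
      using BM_grid_max_anticoncentration[OF BM r, of \<epsilon>] that by simp
  qed
qed

lemma AE_BM_path_sup_neq:
  assumes BM: "is_BM M u B" and "u < \<gamma>" "0 < s"
  shows "AE \<omega> in M. path_sup (\<lambda>t. B t \<omega>) 0 s \<noteq> \<gamma>"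
proof -
  have "AE \<omega> in M. \<forall>n. path_sup (\<lambda>t. B t \<omega>) (s / real (n + 2)) s \<noteq> \<gamma>"
    unfolding AE_all_countable
    using \<open>0 < s\<close> by (intro allI AE_BM_path_sup_neq_of_pos[OF BM]) (simp_all add: divide_less_eq)
  then show ?thesis
    using AE_space
  proof eventually_elim
    case (elim \<omega>)
    then show ?case
      using \<open>0 < s\<close> \<open>u < \<gamma>\<close> is_BM_start[OF BM] is_BM_continuous_on[OF BM]
      by (intro path_sup_neq_of_neq_on_tails) auto
  qed
qed

lemma AE_BM_tube_in_interval:
  assumes BM: "is_BM M u B" and U: "is_interval U" "u \<in> interior U" and "0 < a"
  shows "AE \<omega> in M. (\<forall>t\<in>{0..<a}. B t \<omega> \<in> U) \<longrightarrow>
    (\<forall>\<^sub>F \<delta> in at_right 0. \<forall>t\<in>{0..<a}. \<forall>x. \<bar>x - B t \<omega>\<bar> \<le> \<delta> \<longrightarrow> x \<in> U)"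
proof -
  obtain e where e: "0 < e" "ball u e \<subseteq> U" using U(2) mem_interior by blast
  then have around_u: "u + e / 2 \<in> U" "u - e / 2 \<in> U" by (auto simp: dist_real_def)
  have upper: "AE \<omega> in M. bdd_above U \<longrightarrow> path_sup (\<lambda>t. B t \<omega>) 0 a \<noteq> Sup U"
  proof (cases "bdd_above U")
    case True
    then have "u < Sup U" using cSup_upper[OF around_u(1) True] e by simp
    then show ?thesis using AE_BM_path_sup_neq[OF BM _ \<open>0 < a\<close>] by simp
  qed simp
  have lower: "AE \<omega> in M. bdd_below U \<longrightarrow> path_sup (\<lambda>t. - B t \<omega>) 0 a \<noteq> - Inf U"
  proof (cases "bdd_below U")
    case True
    then have "- u < - Inf U" using cInf_lower[OF around_u(2) True] e by simp
    then show ?thesis using AE_BM_path_sup_neq[OF is_BM_uminus[OF BM] _ \<open>0 < a\<close>] by simp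
  qed simp
  show ?thesis
    using upper lower AE_space
  proof eventually_elim
    case (elim \<omega>)
    show ?case
    proof
      assume "\<forall>t\<in>{0..<a}. B t \<omega> \<in> U"
      with elim(1,2) show "\<forall>\<^sub>F \<delta> in at_right 0. \<forall>t\<in>{0..<a}. \<forall>x. \<bar>x - B t \<omega>\<bar> \<le> \<delta> \<longrightarrow> x \<in> U"
        by (intro eventually_tube_if_extrema_inside[OF U(1) \<open>0 < a\<close>
            is_BM_continuous_on[OF BM elim(3) order_refl]]) auto
    qed
  qed
qed

section \<open>Step functions and their enlargements\<close>

lemma is_interval_sublevel_unimodal:
  fixes f :: "real \<Rightarrow> real"
  assumes "antimono_on {..0} f" "mono_on {0..} f"
  shows "is_interval {x. f x < y}"
  unfolding is_interval_1
proof (intro ballI allI impI)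
  fix a b x assume "a \<in> {x. f x < y}" "b \<in> {x. f x < y}" and x: "a \<le> x \<and> x \<le> b"
  then have "f a < y" "f b < y" by simp_all
  show "x \<in> {x. f x < y}"
  proof (cases "0 \<le> x")
    case True
    then have "f x \<le> f b" using x by (intro mono_onD[OF assms(2)]) auto
    with \<open>f b < y\<close> show ?thesis by simp
  next
    case False
    then have "f x \<le> f a" using x monotone_onD[OF assms(1), of a x] by auto
    with \<open>f a < y\<close> show ?thesis by simp
  qed
qed

lemma isCont_in_interior_sublevel:
  fixes f :: "real \<Rightarrow> real"
  assumes "isCont f u" "f u < y"
  shows "u \<in> interior {x. f x < y}"
proof -
  have "\<forall>\<^sub>F x in nhds u. f x < y"
    using assms tendsto_at_iff_tendsto_nhds[of f u] by (intro order_tendstoD(2)) (auto simp: isCont_def)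
  then obtain S where "open S" "u \<in> S" "\<forall>x\<in>S. f x < y" unfolding eventually_nhds by blast
  then show ?thesis by (intro interiorI[of S]) auto
qed

lemma eq_if_locally_constant_on_segment:
  fixes f :: "real \<Rightarrow> 'b"
  assumes "x \<le> z" and loc: "\<And>a. a \<in> {x..z} \<Longrightarrow> \<exists>e>0. \<forall>b. \<bar>b - a\<bar> < e \<longrightarrow> f b = f a"
  shows "f x = f z"
proof (rule connected_local_const[where A="{x..z}"])
  show "\<forall>a\<in>{x..z}. \<forall>\<^sub>F b in at a within {x..z}. f a = f b"
  proof
    fix a assume "a \<in> {x..z}"
    then obtain e where e: "e > 0" "\<And>b. \<bar>b - a\<bar> < e \<Longrightarrow> f b = f a" using loc by blast
    show "\<forall>\<^sub>F b in at a within {x..z}. f a = f b"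
      unfolding eventually_at dist_real_def
    proof (intro exI[of _ e] conjI ballI impI)
      fix b assume "b \<noteq> a \<and> \<bar>b - a\<bar> < e"
      then show "f a = f b" using e(2)[of b] by simp
    qed (rule e(1))
  qed
qed (use \<open>x \<le> z\<close> in auto)

lemma eq_if_same_points_left:
  fixes f :: "real \<Rightarrow> 'b"
  assumes loc: "\<And>x. x \<notin> S \<Longrightarrow> \<exists>e>0. \<forall>y. \<bar>y - x\<bar> < e \<longrightarrow> f y = f x"
    and "x \<notin> S" "z \<notin> S" "{s\<in>S. s < x} = {s\<in>S. s < z}"
  shows "f x = f z"
proof -
  have ordered: "f x = f z"
    if "x \<le> z" "x \<notin> S" "z \<notin> S" "{s\<in>S. s < x} = {s\<in>S. s < z}" for x z
  proof (rule eq_if_locally_constant_on_segment[OF \<open>x \<le> z\<close> loc])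
    fix a assume a: "a \<in> {x..z}"
    show "a \<notin> S"
    proof
      assume "a \<in> S"
      with a that(2,3) have "x < a" "a < z" by (auto simp: order.order_iff_strict)
      with \<open>a \<in> S\<close> have "a \<in> {s\<in>S. s < z}" by simp
      then have "a \<in> {s\<in>S. s < x}" using that(4) by simp
      with \<open>x < a\<close> show False by simp
    qed
  qed
  show ?thesis
  proof (cases "x \<le> z")
    case True
    show ?thesis by (rule ordered[OF True assms(2-4)])
  next
    case False
    have "f z = f x" using False assms(2-4) by (intro ordered) auto
    then show ?thesis by simp
  qed
qed

lemma step_fun_finite_range:
  assumes "step_fun f"
  shows "finite (range f)"
proof -
  obtain S where S: "finite S" and loc: "\<forall>x. x \<notin> S \<longrightarrow> (\<exists>e>0. \<forall>y. \<bar>y - x\<bar> < e \<longrightarrow> f y = f x)"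
    using assms unfolding step_fun_def by (elim exE conjE)
  \<comment> \<open>off \<open>S\<close>, the value of \<open>f\<close> only depends on which points of \<open>S\<close> lie to the left\<close>
  define rep where "rep C = f (SOME x. x \<notin> S \<and> {s\<in>S. s < x} = C)" for C
  have "range f \<subseteq> f ` S \<union> rep ` Pow S"
  proof
    fix v assume "v \<in> range f"
    then obtain x where x: "v = f x" by blast
    show "v \<in> f ` S \<union> rep ` Pow S"
    proof (cases "x \<in> S")
      case True
      show ?thesis by (rule UnI1, rule image_eqI[where f=f, OF x True])
    next
      case False
      have "rep {s\<in>S. s < x} = f x"
        unfolding rep_def
      proof (rule someI2[of _ x])
        show "x \<notin> S \<and> {s\<in>S. s < x} = {s\<in>S. s < x}" using False by simp
        fix y assume "y \<notin> S \<and> {s\<in>S. s < y} = {s\<in>S. s < x}"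
        then show "f y = f x" using False by (intro eq_if_same_points_left[OF loc[rule_format]]) auto
      qed
      then have "v = rep {s\<in>S. s < x}" using x by simp
      moreover have "{s\<in>S. s < x} \<in> Pow S" by auto
      ultimately show ?thesis by (intro UnI2 image_eqI)
    qed
  qed
  moreover have "finite (f ` S \<union> rep ` Pow S)" using S by simp
  ultimately show ?thesis by (rule finite_subset)
qed

lemma fplus_eq_Max:
  assumes "finite (range f)" "0 \<le> \<delta>"
  shows "fplus f \<delta> x = Max (f ` {x - \<delta>..x + \<delta>})"
  unfolding fplus_def
  using assms finite_subset[OF image_mono[OF subset_UNIV] assms(1)] by (intro cSup_eq_Max) auto

lemma
  assumes "finite (range f)" "0 \<le> \<delta>"
  shows fplus_less_iff: "fplus f \<delta> x < y \<longleftrightarrow> (\<forall>w\<in>{x - \<delta>..x + \<delta>}. f w < y)"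
    and fplus_in_range: "fplus f \<delta> x \<in> range f"
    and fplus_ge: "f x \<le> fplus f \<delta> x"
proof -
  have fin: "finite (f ` {x - \<delta>..x + \<delta>})" and ne: "f ` {x - \<delta>..x + \<delta>} \<noteq> {}"
    using assms finite_subset[OF image_mono[OF subset_UNIV] assms(1)] by auto
  show "fplus f \<delta> x < y \<longleftrightarrow> (\<forall>w\<in>{x - \<delta>..x + \<delta>}. f w < y)"
    using Max_less_iff[OF fin ne] by (simp add: fplus_eq_Max[OF assms])
  show "fplus f \<delta> x \<in> range f"
    using Max_in[OF fin ne] by (auto simp: fplus_eq_Max[OF assms])
  show "f x \<le> fplus f \<delta> x"
    using assms fin by (auto simp: fplus_eq_Max[OF assms] intro!: Max_ge)
qed

lemma fplus_mono:
  assumes "finite (range f)" "0 \<le> \<delta>" "\<delta> \<le> \<delta>'"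
  shows "fplus f \<delta> x \<le> fplus f \<delta>' x"
  unfolding fplus_eq_Max[OF assms(1,2)] fplus_eq_Max[OF assms(1) order_trans[OF assms(2,3)]]
  using assms finite_subset[OF image_mono[OF subset_UNIV] assms(1)] by (intro Max_mono) auto

lemma is_interval_sublevel_fplus:
  assumes fin: "finite (range f)" and "0 \<le> \<delta>" and I: "is_interval {x. f x < y}"
  shows "is_interval {x. fplus f \<delta> x < y}"
  unfolding is_interval_1 mem_Collect_eq fplus_less_iff[OF fin \<open>0 \<le> \<delta>\<close>]
proof (intro ballI allI impI CollectI)
  fix a b x w
  assume "a \<in> {x. \<forall>w\<in>{x - \<delta>..x + \<delta>}. f w < y}" "b \<in> {x. \<forall>w\<in>{x - \<delta>..x + \<delta>}. f w < y}"
    and "a \<le> x \<and> x \<le> b" and "w \<in> {x - \<delta>..x + \<delta>}"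
  \<comment> \<open>translate \<open>w\<close> along with the centre from \<open>x\<close> to \<open>a\<close> and to \<open>b\<close>\<close>
  then have "w - x + a \<in> {x. f x < y}" "w - x + b \<in> {x. f x < y}" "w - x + a \<le> w" "w \<le> w - x + b"
    by auto
  then have "w \<in> {x. f x < y}" by (rule mem_is_interval_1_I[OF I])
  then show "f w < y" by simp
qed

section \<open>Barrier events\<close>

definition no_early_hit :: "'a measure \<Rightarrow> (real \<Rightarrow> 'a \<Rightarrow> real) \<Rightarrow> (real \<Rightarrow> real) \<Rightarrow> real \<Rightarrow> 'a set" where
  "no_early_hit M X g c = {\<omega>\<in>space M. \<forall>t\<ge>0. g (X t \<omega>) \<le> t + c}"

lemma hitting_event_eq_no_early_hit:
  "{\<omega>\<in>space M. \<forall>v. hitting_time X v \<omega> \<ge> ereal (g v - c)} = no_early_hit M X g c"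
  unfolding no_early_hit_def hitting_time_def le_INF_iff by auto

lemma no_early_hit_antimono:
  assumes "\<And>x. g x \<le> h x"
  shows "no_early_hit M X h c \<subseteq> no_early_hit M X g c"
  unfolding no_early_hit_def by (auto intro: order_trans[OF assms])

lemma no_early_hit_iff_sublevels:
  assumes "range g \<subseteq> V"
  shows "\<omega> \<in> no_early_hit M X g c \<longleftrightarrow>
    \<omega> \<in> space M \<and> (\<forall>y\<in>V. c < y \<longrightarrow> (\<forall>t\<in>{0..<y - c}. X t \<omega> \<in> {x. g x < y}))"
    (is "_ \<longleftrightarrow> _ \<and> ?levels")
proof -
  have "(\<forall>t\<ge>0. g (X t \<omega>) \<le> t + c) \<longleftrightarrow> ?levels"
  proof
    assume "\<forall>t\<ge>0. g (X t \<omega>) \<le> t + c"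
    then show ?levels by force
  next
    assume levels: ?levels
    show "\<forall>t\<ge>0. g (X t \<omega>) \<le> t + c"
    proof (intro allI impI)
      fix t :: real assume "0 \<le> t"
      show "g (X t \<omega>) \<le> t + c"
      proof (rule ccontr)
        \<comment> \<open>otherwise the level \<open>y = g (X t \<omega>)\<close> is violated at time \<open>t\<close>\<close>
        assume "\<not> g (X t \<omega>) \<le> t + c"
        moreover have "g (X t \<omega>) \<in> V" using assms by auto
        ultimately show False using levels \<open>0 \<le> t\<close> by force
      qed
    qed
  qed
  then show ?thesis by (simp add: no_early_hit_def)
qed

lemma sets_no_early_hit:
  fixes X :: "real \<Rightarrow> 'a \<Rightarrow> real"
  assumes meas: "\<And>t. X t \<in> borel_measurable M"
    and cont: "\<And>\<omega> b. \<omega> \<in> space M \<Longrightarrow> continuous_on {0..b} (\<lambda>t. X t \<omega>)"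
    and fin: "finite (range g)" and I: "\<And>y. is_interval {x. g x < y}"
  shows "no_early_hit M X g c \<in> sets M"
proof -
  have "no_early_hit M X g c = {\<omega>\<in>space M. \<forall>y\<in>range g. c < y \<longrightarrow> (\<forall>t\<in>{0..<y - c}. X t \<omega> \<in> {x. g x < y})}"
    by (rule set_eqI) (simp only: no_early_hit_iff_sublevels[OF subset_refl] mem_Collect_eq)
  also have "\<dots> \<in> sets M"
  proof (rule sets.sets_Collect_countable_All')
    fix y
    have "{\<omega>\<in>space M. \<forall>t\<in>{0..<y - c}. X t \<omega> \<in> {x. g x < y}} \<in> sets M"
      by (intro sets_stays_in_interval meas I cont)
    then show "{\<omega>\<in>space M. c < y \<longrightarrow> (\<forall>t\<in>{0..<y - c}. X t \<omega> \<in> {x. g x < y})} \<in> sets M"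
      by (cases "c < y") auto
  qed (rule countable_finite[OF fin])
  finally show ?thesis .
qed

lemma AE_no_early_hit_fplus:
  assumes BM: "is_BM M u B" and fin: "finite (range f)" and I: "\<And>y. is_interval {x. f x < y}"
    and cont: "isCont f u"
  shows "AE \<omega> in M. \<omega> \<in> no_early_hit M B f (f u) \<longrightarrow>
    (\<forall>\<^sub>F \<delta> in at_right 0. \<omega> \<in> no_early_hit M B (fplus f \<delta>) (f u))"
proof -
  define V where "V = {y\<in>range f. f u < y}"
  have "finite V" using fin by (simp add: V_def)
  have "AE \<omega> in M. \<forall>y\<in>V. (\<forall>t\<in>{0..<y - f u}. B t \<omega> \<in> {x. f x < y}) \<longrightarrow>
      (\<forall>\<^sub>F \<delta> in at_right 0. \<forall>t\<in>{0..<y - f u}. \<forall>x. \<bar>x - B t \<omega>\<bar> \<le> \<delta> \<longrightarrow> x \<in> {x. f x < y})"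
    using \<open>finite V\<close>
    by (intro AE_finite_allI AE_BM_tube_in_interval[OF BM I] isCont_in_interior_sublevel[OF cont])
      (auto simp: V_def)
  then show ?thesis
  proof (rule AE_mp[OF _ AE_I2], intro impI)
    fix \<omega> assume tubes: "\<forall>y\<in>V. (\<forall>t\<in>{0..<y - f u}. B t \<omega> \<in> {x. f x < y}) \<longrightarrow>
      (\<forall>\<^sub>F \<delta> in at_right 0. \<forall>t\<in>{0..<y - f u}. \<forall>x. \<bar>x - B t \<omega>\<bar> \<le> \<delta> \<longrightarrow> x \<in> {x. f x < y})"
      and "\<omega> \<in> no_early_hit M B f (f u)"
    then have \<omega>: "\<omega> \<in> space M"
      and "\<forall>y\<in>range f. f u < y \<longrightarrow> (\<forall>t\<in>{0..<y - f u}. B t \<omega> \<in> {x. f x < y})"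
      by (auto simp: no_early_hit_iff_sublevels[OF subset_refl])
    then have stays: "\<forall>y\<in>V. \<forall>t\<in>{0..<y - f u}. B t \<omega> \<in> {x. f x < y}"
      by (auto simp: V_def)
    have "\<forall>\<^sub>F \<delta> in at_right 0. \<forall>y\<in>V. \<forall>t\<in>{0..<y - f u}. \<forall>x. \<bar>x - B t \<omega>\<bar> \<le> \<delta> \<longrightarrow> f x < y"
      using tubes stays \<open>finite V\<close> by (intro eventually_ball_finite) auto
    then show "\<forall>\<^sub>F \<delta> in at_right 0. \<omega> \<in> no_early_hit M B (fplus f \<delta>) (f u)"
      using eventually_at_right_less[of 0]
    proof eventually_elim
      case (elim \<delta>)
      have "0 \<le> \<delta>" using elim(2) by simp
      then have rng: "range (fplus f \<delta>) \<subseteq> range f" using fplus_in_range[OF fin] by auto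
      have "\<forall>y\<in>range f. f u < y \<longrightarrow> (\<forall>t\<in>{0..<y - f u}. B t \<omega> \<in> {x. fplus f \<delta> x < y})"
        using elim(1) \<open>0 \<le> \<delta>\<close> by (auto simp: fplus_less_iff[OF fin] V_def)
      then show ?case using \<omega> unfolding no_early_hit_iff_sublevels[OF rng] by blast
    qed
  qed
qed

theorem lemma2p5:
  fixes \<xi> :: real and f :: "real \<Rightarrow> real" and u :: real
    and M :: "'a measure" and B :: "real \<Rightarrow> 'a \<Rightarrow> real"
  assumes "\<xi> > 0"
    and "class_C_step \<xi> f"
    and "u \<notin> {x. \<not> isCont f x}"
    and "is_BM M u B"
  shows "((\<lambda>\<delta>. measure M {\<omega>\<in>space M. \<forall>v. hitting_time B v \<omega> \<ge> ereal (fplus f \<delta> v - f u)})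
           \<longlongrightarrow> measure M {\<omega>\<in>space M. \<forall>v. hitting_time B v \<omega> \<ge> ereal (f v - f u)})
         (at_right 0)"
proof -
  \<comment> \<open>of \<open>class_C\<close> only the monotonicity is used\<close>
  note BM = \<open>is_BM M u B\<close>
  interpret prob_space M using is_BM_prob_space[OF BM] .
  have fin: "finite (range f)"
    using \<open>class_C_step \<xi> f\<close> step_fun_finite_range by (auto simp: class_C_step_def)
  have sublevel: "is_interval {x. f x < y}" for y
    using \<open>class_C_step \<xi> f\<close> is_interval_sublevel_unimodal by (auto simp: class_C_step_def class_C_def)
  have fin_fplus: "finite (range (fplus f \<delta>))" if "0 \<le> \<delta>" for \<delta>
    using fplus_in_range[OF fin that] by (intro finite_subset[OF _ fin]) auto
  have sets: "no_early_hit M B g (f u) \<in> sets M"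
    if "finite (range g)" "\<And>y. is_interval {x. g x < y}" for g
    using that is_BM_measurable[OF BM] is_BM_continuous_on[OF BM] by (intro sets_no_early_hit) auto
  show ?thesis
    unfolding hitting_event_eq_no_early_hit
  proof (rule tendsto_measure_at_right_0_antimono)
    show "no_early_hit M B (fplus f \<delta>) (f u) \<in> sets M" if "0 < \<delta>" for \<delta>
      using that fin_fplus is_interval_sublevel_fplus[OF fin _ sublevel] by (intro sets) auto
    show "no_early_hit M B f (f u) \<in> sets M" by (intro sets fin sublevel)
    show "no_early_hit M B (fplus f \<delta>') (f u) \<subseteq> no_early_hit M B (fplus f \<delta>) (f u)"
      if "0 < \<delta>" "\<delta> \<le> \<delta>'" for \<delta> \<delta>'
      using that by (intro no_early_hit_antimono fplus_mono fin) auto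
    show "no_early_hit M B (fplus f \<delta>) (f u) \<subseteq> no_early_hit M B f (f u)" if "0 < \<delta>" for \<delta>
      using that by (intro no_early_hit_antimono fplus_ge fin) auto
    show "AE \<omega> in M. \<omega> \<in> no_early_hit M B f (f u) \<longrightarrow>
        (\<forall>\<^sub>F \<delta> in at_right 0. \<omega> \<in> no_early_hit M B (fplus f \<delta>) (f u))"
      using \<open>u \<notin> {x. \<not> isCont f x}\<close> by (intro AE_no_early_hit_fplus[OF BM fin sublevel]) simp
  qed
qed

end
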